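(* Let $G$ be a finite connected graph with node set $V$. Define the binary relation $\preceq$ on $V$ by $u\preceq x$ if and only if $e(u)=d(u,x)+e(x)$. Then $\preceq$ is a partial order on $V$. Moreover, the set $U^{\preceq}$ of all maximal elements of this partial order is the unique tight upper certificate of $G$ of minimum size.
   Context: $d$ is the shortest-path distance in the (undirected, unweighted) graph $G$ and $e(u)=\max_{v\in V}d(u,v)$. For $U\subseteq V$, $e^U(v)=\min_{x\in U}(d(v,x)+e(x))$ ($+\infty$ if $U=\emptyset$). A tight upper certificate is a set $U\subseteq V$ such that $e^U(v)=e(v)$ for all $v\in V$. *)

theory Defs
  imports Main "HOL-Library.Extended_Nat"
begin

definition finite_graph :: "'a set \<Rightarrow> ('a \<Rightarrow> 'a \<Rightarrow> bool) \<Rightarrow> bool" where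
  "finite_graph V E \<longleftrightarrow> finite V \<and> (\<forall>u v. E u v \<longrightarrow> u \<in> V \<and> v \<in> V)
     \<and> (\<forall>u v. E u v \<longrightarrow> E v u) \<and> (\<forall>u. \<not> E u u)"

definition is_walk :: "('a \<Rightarrow> 'a \<Rightarrow> bool) \<Rightarrow> 'a \<Rightarrow> 'a \<Rightarrow> 'a list \<Rightarrow> bool" where
  "is_walk E u v xs \<longleftrightarrow> xs \<noteq> [] \<and> hd xs = u \<and> last xs = v
     \<and> (\<forall>i. Suc i < length xs \<longrightarrow> E (xs ! i) (xs ! Suc i))"

definition connected_graph :: "'a set \<Rightarrow> ('a \<Rightarrow> 'a \<Rightarrow> bool) \<Rightarrow> bool" where
  "connected_graph V E \<longleftrightarrow> finite_graph V E \<and> V \<noteq> {}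
     \<and> (\<forall>u\<in>V. \<forall>v\<in>V. \<exists>xs. is_walk E u v xs)"

definition dist :: "('a \<Rightarrow> 'a \<Rightarrow> bool) \<Rightarrow> 'a \<Rightarrow> 'a \<Rightarrow> nat" where
  "dist E u v = (LEAST n. \<exists>xs. is_walk E u v xs \<and> length xs = Suc n)"

definition ecc :: "'a set \<Rightarrow> ('a \<Rightarrow> 'a \<Rightarrow> bool) \<Rightarrow> 'a \<Rightarrow> nat" where
  "ecc V E u = Max ((\<lambda>v. dist E u v) ` V)"

text \<open>e^U(v) = min over x in U of d(v,x) + e(x); infinity if U is empty.\<close>
definition eccU :: "'a set \<Rightarrow> ('a \<Rightarrow> 'a \<Rightarrow> bool) \<Rightarrow> 'a set \<Rightarrow> 'a \<Rightarrow> enat" where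
  "eccU V E U v = (INF x\<in>U. enat (dist E v x + ecc V E x))"

definition tight_upper_certificate :: "'a set \<Rightarrow> ('a \<Rightarrow> 'a \<Rightarrow> bool) \<Rightarrow> 'a set \<Rightarrow> bool" where
  "tight_upper_certificate V E U \<longleftrightarrow> U \<subseteq> V \<and> (\<forall>v\<in>V. eccU V E U v = enat (ecc V E v))"

definition ecc_preceq :: "'a set \<Rightarrow> ('a \<Rightarrow> 'a \<Rightarrow> bool) \<Rightarrow> 'a \<Rightarrow> 'a \<Rightarrow> bool" where
  "ecc_preceq V E u x \<longleftrightarrow> ecc V E u = dist E u x + ecc V E x"

definition ecc_rel :: "'a set \<Rightarrow> ('a \<Rightarrow> 'a \<Rightarrow> bool) \<Rightarrow> 'a rel" where
  "ecc_rel V E = {(u, x). u \<in> V \<and> x \<in> V \<and> ecc_preceq V E u x}"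

definition maximal_elems :: "'a set \<Rightarrow> ('a \<Rightarrow> 'a \<Rightarrow> bool) \<Rightarrow> 'a set" where
  "maximal_elems V E = {x \<in> V. \<forall>y\<in>V. ecc_preceq V E x y \<longrightarrow> y = x}"

end

theory Submission
  imports Defs
begin

text \<open>
  The eccentricity satisfies e(u) \<le> d(u,x) + e(x) for all vertices, so u \<preceq> x says that this
  triangle inequality is tight. Transitivity then follows from the triangle inequality for d, and
  antisymmetry from d(u,x) = 0 \<Longrightarrow> u = x. Since u \<preceq> x with u \<noteq> x forces e(x) < e(u),
  every vertex lies below a maximal element, which makes the maximal elements a tight upper
  certificate. Conversely, for a maximal M the inequality e(M) \<le> d(M,x) + e(x) is strict for
  every x \<noteq> M, so every tight upper certificate must contain M; this gives both minimality and
  uniqueness.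
\<close>

lemma is_walk_iff_successively:
  "is_walk E u v xs \<longleftrightarrow> xs \<noteq> [] \<and> hd xs = u \<and> last xs = v \<and> successively E xs"
  by (simp add: is_walk_def successively_conv_nth)

lemma is_walk_append:
  assumes "is_walk E u v xs" "is_walk E v w ys"
  shows "is_walk E u w (xs @ tl ys)"
proof -
  obtain ys' where ys: "ys = v # ys'"
    using assms(2) by (cases ys) (auto simp: is_walk_iff_successively)
  show ?thesis
    using assms unfolding ys
    by (cases ys') (auto simp: is_walk_iff_successively successively_append_iff)
qed

lemma dist_le_walk_length: "is_walk E u v xs \<Longrightarrow> dist E u v \<le> length xs - 1"
  unfolding dist_def
  by (rule Least_le) (auto simp: is_walk_def intro!: exI[of _ xs])

lemma shortest_walk_exists:
  assumes "is_walk E u v xs"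
  shows "\<exists>ys. is_walk E u v ys \<and> length ys = Suc (dist E u v)"
proof -
  have "\<exists>n ys. is_walk E u v ys \<and> length ys = Suc n"
    using assms by (auto simp: is_walk_def intro!: exI[of _ "length xs - 1"] exI[of _ xs])
  then show ?thesis
    unfolding dist_def by (rule LeastI_ex)
qed

lemma dist_self [simp]: "dist E u u = 0"
  using dist_le_walk_length[of E u u "[u]"] by (simp add: is_walk_def)

lemma dist_eq_0_imp_eq:
  assumes "is_walk E u v xs" "dist E u v = 0"
  shows "u = v"
proof -
  obtain ys where "is_walk E u v ys" "length ys = 1"
    using shortest_walk_exists[OF assms(1)] assms(2) by auto
  then show ?thesis
    by (cases ys) (auto simp: is_walk_def)
qed

lemma dist_triangle:
  assumes "is_walk E u v xs" "is_walk E v w ys"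
  shows "dist E u w \<le> dist E u v + dist E v w"
proof -
  obtain xs' where xs': "is_walk E u v xs'" "length xs' = Suc (dist E u v)"
    using shortest_walk_exists[OF assms(1)] by blast
  obtain ys' where ys': "is_walk E v w ys'" "length ys' = Suc (dist E v w)"
    using shortest_walk_exists[OF assms(2)] by blast
  show ?thesis
    using dist_le_walk_length[OF is_walk_append[OF xs'(1) ys'(1)]] xs'(2) ys'(2) by simp
qed

locale connected_finite_graph =
  fixes V :: "'a set" and E :: "'a \<Rightarrow> 'a \<Rightarrow> bool"
  assumes connected: "connected_graph V E"
begin

lemma finite_vertices: "finite V"
  and vertices_nonempty: "V \<noteq> {}"
  and walk_exists: "u \<in> V \<Longrightarrow> v \<in> V \<Longrightarrow> \<exists>xs. is_walk E u v xs"
  using connected unfolding connected_graph_def finite_graph_def by auto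

lemma dist_triangle_in_V:
  "u \<in> V \<Longrightarrow> v \<in> V \<Longrightarrow> w \<in> V \<Longrightarrow> dist E u w \<le> dist E u v + dist E v w"
  using walk_exists dist_triangle by metis

lemma dist_eq_0_iff_in_V: "u \<in> V \<Longrightarrow> v \<in> V \<Longrightarrow> dist E u v = 0 \<longleftrightarrow> u = v"
  using walk_exists dist_eq_0_imp_eq by fastforce

lemma dist_le_ecc: "v \<in> V \<Longrightarrow> dist E u v \<le> ecc V E u"
  unfolding ecc_def using finite_vertices by simp

lemma ecc_attained: "\<exists>v\<in>V. dist E u v = ecc V E u"
proof -
  have "ecc V E u \<in> (\<lambda>v. dist E u v) ` V"
    unfolding ecc_def using finite_vertices vertices_nonempty by (intro Max_in) auto
  then show ?thesis by auto
qed

lemma ecc_triangle: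
  assumes "u \<in> V" "x \<in> V"
  shows "ecc V E u \<le> dist E u x + ecc V E x"
proof -
  obtain v where v: "v \<in> V" "dist E u v = ecc V E u"
    using ecc_attained by blast
  have "dist E u v \<le> dist E u x + dist E x v"
    using dist_triangle_in_V assms v(1) by blast
  also have "\<dots> \<le> dist E u x + ecc V E x"
    using dist_le_ecc v(1) by simp
  finally show ?thesis
    using v(2) by simp
qed

lemma ecc_preceq_trans:
  "u \<in> V \<Longrightarrow> x \<in> V \<Longrightarrow> y \<in> V \<Longrightarrow> ecc_preceq V E u x \<Longrightarrow> ecc_preceq V E x y
    \<Longrightarrow> ecc_preceq V E u y"
  unfolding ecc_preceq_def using dist_triangle_in_V[of u x y] ecc_triangle[of u y] by linarith

lemma ecc_less_if_preceq:
  "u \<in> V \<Longrightarrow> x \<in> V \<Longrightarrow> ecc_preceq V E u x \<Longrightarrow> u \<noteq> x \<Longrightarrow> ecc V E x < ecc V E u"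
  unfolding ecc_preceq_def using dist_eq_0_iff_in_V by fastforce

lemma partial_order_ecc_rel: "partial_order_on V (ecc_rel V E)"
  unfolding partial_order_on_def preorder_on_def
proof (intro conjI)
  show "ecc_rel V E \<subseteq> V \<times> V"
    unfolding ecc_rel_def by blast
  show "refl_on V (ecc_rel V E)"
    by (rule refl_onI) (auto simp: ecc_rel_def ecc_preceq_def)
  show "trans (ecc_rel V E)"
    by (rule transI) (auto simp: ecc_rel_def intro: ecc_preceq_trans)
  show "antisym (ecc_rel V E)"
    by (rule antisymI) (clarsimp simp: ecc_rel_def, metis ecc_less_if_preceq less_asym)
qed

lemma exists_maximal_above:
  assumes "v \<in> V"
  shows "\<exists>m\<in>maximal_elems V E. ecc_preceq V E v m"
proof -
  let ?above_v = "\<lambda>x. x \<in> V \<and> ecc_preceq V E v x"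
  have "?above_v v"
    using assms by (simp add: ecc_preceq_def)
  then obtain m where m: "?above_v m" and least: "\<And>y. ?above_v y \<Longrightarrow> ecc V E m \<le> ecc V E y"
    using ex_has_least_nat[of ?above_v v "ecc V E"] by blast
  have "m \<in> maximal_elems V E"
    unfolding maximal_elems_def
  proof (intro CollectI conjI ballI impI)
    show "m \<in> V"
      using m by simp
    fix y
    assume y: "y \<in> V" "ecc_preceq V E m y"
    then have "ecc V E m \<le> ecc V E y"
      using least ecc_preceq_trans assms m by blast
    then show "y = m"
      using ecc_less_if_preceq[of m y] y m by fastforce
  qed
  then show ?thesis
    using m by blast
qed

lemma ecc_le_eccU: "U \<subseteq> V \<Longrightarrow> v \<in> V \<Longrightarrow> enat (ecc V E v) \<le> eccU V E U v"
  unfolding eccU_def using ecc_triangle by (auto intro!: INF_greatest)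

lemma tight_upper_certificate_maximal_elems:
  "tight_upper_certificate V E (maximal_elems V E)"
  unfolding tight_upper_certificate_def
proof (intro conjI ballI)
  show subset: "maximal_elems V E \<subseteq> V"
    unfolding maximal_elems_def by auto
  fix v
  assume v: "v \<in> V"
  obtain m where m: "m \<in> maximal_elems V E" "ecc_preceq V E v m"
    using exists_maximal_above v by blast
  have "eccU V E (maximal_elems V E) v \<le> enat (dist E v m + ecc V E m)"
    unfolding eccU_def using m(1) by (rule INF_lower)
  also have "\<dots> = enat (ecc V E v)"
    using m(2) unfolding ecc_preceq_def by simp
  finally show "eccU V E (maximal_elems V E) v = enat (ecc V E v)"
    using ecc_le_eccU[OF subset v] by simp
qed

lemma maximal_elems_subset_tight_upper_certificate:
  assumes tight: "tight_upper_certificate V E U"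
  shows "maximal_elems V E \<subseteq> U"
proof
  fix M
  assume M: "M \<in> maximal_elems V E"
  then have "M \<in> V"
    unfolding maximal_elems_def by auto
  have "U \<subseteq> V"
    using tight unfolding tight_upper_certificate_def by auto
  show "M \<in> U"
  proof (rule ccontr)
    assume "M \<notin> U"
    have "enat (Suc (ecc V E M)) \<le> eccU V E U M"
      unfolding eccU_def
    proof (rule INF_greatest)
      fix x
      assume x: "x \<in> U"
      with \<open>U \<subseteq> V\<close> \<open>M \<notin> U\<close> M have "x \<in> V" "\<not> ecc_preceq V E M x"
        unfolding maximal_elems_def by auto
      then show "enat (Suc (ecc V E M)) \<le> enat (dist E M x + ecc V E x)"
        using ecc_triangle[OF \<open>M \<in> V\<close>, of x] unfolding ecc_preceq_def by simp
    qed
    moreover have "eccU V E U M = enat (ecc V E M)"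
      using tight \<open>M \<in> V\<close> unfolding tight_upper_certificate_def by auto
    ultimately show False
      by simp
  qed
qed

lemma finite_tight_upper_certificate: "tight_upper_certificate V E U \<Longrightarrow> finite U"
  using finite_vertices finite_subset unfolding tight_upper_certificate_def by blast

end

theorem proposition2:
  fixes V :: "'a set" and E :: "'a \<Rightarrow> 'a \<Rightarrow> bool"
  assumes "connected_graph V E"
  shows "partial_order_on V (ecc_rel V E)
    \<and> tight_upper_certificate V E (maximal_elems V E)
    \<and> (\<forall>U. tight_upper_certificate V E U \<longrightarrow> card (maximal_elems V E) \<le> card U)
    \<and> (\<forall>U. tight_upper_certificate V E U \<and> card U = card (maximal_elems V E)
          \<longrightarrow> U = maximal_elems V E)"
proof -
  interpret connected_finite_graph V E
    using assms by unfold_locales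
  have minimal: "card (maximal_elems V E) \<le> card U" if "tight_upper_certificate V E U" for U
    using card_mono[OF finite_tight_upper_certificate maximal_elems_subset_tight_upper_certificate]
      that by simp
  have unique: "U = maximal_elems V E"
    if "tight_upper_certificate V E U" "card U = card (maximal_elems V E)" for U
    using card_subset_eq[OF finite_tight_upper_certificate maximal_elems_subset_tight_upper_certificate]
      that by (metis (no_types))
  show ?thesis
    using partial_order_ecc_rel tight_upper_certificate_maximal_elems minimal unique by blast
qed

end
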